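(* Let $M$ be a tabular MDP with finite $\mathcal S,\mathcal A$, discount $\gamma\in(0,1)$, and reward $r(\cdot;\theta^* )$ with $|r(s,a;\theta^* )|\le R_{\max}$. Let $P^*$ and $\tilde P$ be two transition models, and let $Q^*,\tilde Q$ be the fixed points of the soft Bellman update using $P^*$ and $\tilde P$ respectively, with policies $\pi^*(a\mid s;\theta^* )\propto\exp(Q^*(s,a;\theta^* ))$ and $\tilde\pi(a\mid s;\theta^* )\propto\exp(\tilde Q(s,a;\theta^* ))$. Let $\Delta_P=\sup_{s,a}\|P^*(\cdot\mid s,a)-\tilde P(\cdot\mid s,a)\|_1$. Then $$\mathbb E_{s\sim w^*}\big[D_{\mathrm{KL}}(\pi^*(\cdot\mid s;\theta^* )\,\|\,\tilde\pi(\cdot\mid s;\theta^* ))\big]\le\frac{2|\mathcal A|R_{\max}}{(1-\gamma)^2}\,\Delta_P .$$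
   Context: The soft Bellman update with transition model $P$ and discount $\gamma$ is $Q(s,a;\theta)=r(s,a;\theta)+\gamma\sum_{s'}P(s'\mid s,a)V(s';\theta)$, $V(s;\theta)=\log\sum_{a\in\mathcal A}\exp(Q(s,a;\theta))$. $w^*$ is the discounted stationary state distribution of $\pi^*$ (under the true MDP). *)

theory Defs
  imports Complex_Main
begin

text \<open>Tabular MDP: finite state type 's, finite action type 'a.
  A transition model is P :: 's => 'a => 's => real, P s a s' = P(s' | s, a).\<close>

definition stochastic_kernel :: "('s::finite \<Rightarrow> 'a::finite \<Rightarrow> 's \<Rightarrow> real) \<Rightarrow> bool" where
  "stochastic_kernel P \<longleftrightarrow> (\<forall>s a s'. 0 \<le> P s a s') \<and> (\<forall>s a. (\<Sum>s'\<in>UNIV. P s a s') = 1)"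

definition soft_value :: "('s \<Rightarrow> 'a::finite \<Rightarrow> real) \<Rightarrow> 's \<Rightarrow> real" where
  "soft_value Q s = ln (\<Sum>a\<in>UNIV. exp (Q s a))"

definition soft_bellman_fixpoint ::
  "real \<Rightarrow> ('s::finite \<Rightarrow> 'a::finite \<Rightarrow> real) \<Rightarrow> ('s \<Rightarrow> 'a \<Rightarrow> 's \<Rightarrow> real) \<Rightarrow> ('s \<Rightarrow> 'a \<Rightarrow> real) \<Rightarrow> bool" where
  "soft_bellman_fixpoint \<gamma> r P Q \<longleftrightarrow>
     (\<forall>s a. Q s a = r s a + \<gamma> * (\<Sum>s'\<in>UNIV. P s a s' * soft_value Q s'))"

definition softmax_policy :: "('s \<Rightarrow> 'a::finite \<Rightarrow> real) \<Rightarrow> 's \<Rightarrow> 'a \<Rightarrow> real" where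
  "softmax_policy Q s a = exp (Q s a) / (\<Sum>b\<in>UNIV. exp (Q s b))"

definition KL_div :: "('a::finite \<Rightarrow> real) \<Rightarrow> ('a \<Rightarrow> real) \<Rightarrow> real" where
  "KL_div p q = (\<Sum>a\<in>UNIV. p a * ln (p a / q a))"

definition policy_transition ::
  "('s::finite \<Rightarrow> 'a::finite \<Rightarrow> 's \<Rightarrow> real) \<Rightarrow> ('s \<Rightarrow> 'a \<Rightarrow> real) \<Rightarrow> 's \<Rightarrow> 's \<Rightarrow> real" where
  "policy_transition P \<pi> s s' = (\<Sum>a\<in>UNIV. \<pi> s a * P s a s')"

fun state_dist ::
  "('s::finite \<Rightarrow> real) \<Rightarrow> ('s \<Rightarrow> 'a::finite \<Rightarrow> 's \<Rightarrow> real) \<Rightarrow> ('s \<Rightarrow> 'a \<Rightarrow> real) \<Rightarrow> nat \<Rightarrow> 's \<Rightarrow> real" where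
  "state_dist \<mu>0 P \<pi> 0 = \<mu>0"
| "state_dist \<mu>0 P \<pi> (Suc t) = (\<lambda>s'. \<Sum>s\<in>UNIV. state_dist \<mu>0 P \<pi> t s * policy_transition P \<pi> s s')"

definition discounted_state_dist ::
  "real \<Rightarrow> ('s::finite \<Rightarrow> real) \<Rightarrow> ('s \<Rightarrow> 'a::finite \<Rightarrow> 's \<Rightarrow> real) \<Rightarrow> ('s \<Rightarrow> 'a \<Rightarrow> real) \<Rightarrow> 's \<Rightarrow> real" where
  "discounted_state_dist \<gamma> \<mu>0 P \<pi> s = (1 - \<gamma>) * (\<Sum>t. \<gamma> ^ t * state_dist \<mu>0 P \<pi> t s)"

text \<open>Delta_P = sup_{s,a} || P(.|s,a) - P'(.|s,a) ||_1 (a max, since everything is finite).\<close>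
definition model_dist ::
  "('s::finite \<Rightarrow> 'a::finite \<Rightarrow> 's \<Rightarrow> real) \<Rightarrow> ('s \<Rightarrow> 'a \<Rightarrow> 's \<Rightarrow> real) \<Rightarrow> real" where
  "model_dist P P' = Max (range (\<lambda>(s, a). \<Sum>s'\<in>UNIV. \<bar>P s a s' - P' s a s'\<bar>))"

end

theory Submission
  imports Defs
begin

text \<open>Log-sum-exp is 1-Lipschitz for the sup norm, so the soft value inherits the span bound
  \<open>2 Rmax / (1 - \<gamma>)\<close> of a discounted problem and perturbs by at most \<open>\<parallel>Q1 - Q2\<parallel>\<^sub>\<infinity>\<close>.
  Comparing the two Bellman equations, the model error enters only through
  \<open>\<Sum>s'. (P1 - P2) V\<close>; as both rows sum to 1, \<open>V\<close> may be centred, giving the bound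
  \<open>\<Delta>\<^sub>P \<cdot> Rmax / (1 - \<gamma>)\<close>, and a contraction argument yields
  \<open>\<parallel>Q\<^sup>* - Q\<^sup>~\<parallel>\<^sub>\<infinity> \<le> \<Delta>\<^sub>P Rmax / (1 - \<gamma>)\<^sup>2\<close>.
  Finally the KL divergence of two Boltzmann policies is at most twice the sup distance of
  their Q-functions; averaging over the discounted state distribution, a probability vector,
  gives the claim even without the factor \<open>|\<A>| \<ge> 1\<close>.\<close>

lemma convex_combination_le:
  fixes p f :: "'a \<Rightarrow> real"
  assumes "finite A" "\<And>x. x \<in> A \<Longrightarrow> 0 \<le> p x" "sum p A = 1" "\<And>x. x \<in> A \<Longrightarrow> f x \<le> c"
  shows "(\<Sum>x\<in>A. p x * f x) \<le> c"
proof -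
  have "(\<Sum>x\<in>A. p x * f x) \<le> (\<Sum>x\<in>A. p x * c)"
    by (rule sum_mono, rule mult_left_mono) (use assms in auto)
  also have "\<dots> = c" using assms(3) by (simp add: sum_distrib_right[symmetric])
  finally show ?thesis .
qed

lemma convex_combination_ge:
  fixes p f :: "'a \<Rightarrow> real"
  assumes "finite A" "\<And>x. x \<in> A \<Longrightarrow> 0 \<le> p x" "sum p A = 1" "\<And>x. x \<in> A \<Longrightarrow> c \<le> f x"
  shows "c \<le> (\<Sum>x\<in>A. p x * f x)"
  using convex_combination_le[of A p "\<lambda>x. - f x" "- c"] assms by (simp add: sum_negf)

lemma abs_sum_diff_mult_le:
  fixes p q f :: "'a \<Rightarrow> real"
  assumes "finite A" "A \<noteq> {}" "sum p A = sum q A"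
    and span: "\<And>x y. x \<in> A \<Longrightarrow> y \<in> A \<Longrightarrow> f x - f y \<le> 2 * K"
  shows "\<bar>\<Sum>x\<in>A. (p x - q x) * f x\<bar> \<le> (\<Sum>x\<in>A. \<bar>p x - q x\<bar>) * K"
proof -
  define c where "c = (Max (f ` A) + Min (f ` A)) / 2"
  have "Max (f ` A) \<in> f ` A" "Min (f ` A) \<in> f ` A" using assms(1,2) by auto
  then obtain xM xm where extremal: "xM \<in> A" "f xM = Max (f ` A)" "xm \<in> A" "f xm = Min (f ` A)"
    by (metis imageE)
  have centred: "\<bar>f x - c\<bar> \<le> K" if "x \<in> A" for x
  proof -
    have "Min (f ` A) \<le> f x" "f x \<le> Max (f ` A)" using assms(1) that by auto
    moreover have "Max (f ` A) - Min (f ` A) \<le> 2 * K" using span[of xM xm] extremal by simp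
    ultimately show ?thesis unfolding c_def abs_le_iff by (simp add: field_simps)
  qed
  \<comment> \<open>the rows have equal mass, so subtracting the midpoint \<open>c\<close> of the range of \<open>f\<close> is free\<close>
  have "(\<Sum>x\<in>A. (p x - q x) * f x) = (\<Sum>x\<in>A. (p x - q x) * (f x - c))"
    using assms(3) by (simp add: right_diff_distrib sum_subtractf sum_distrib_right[symmetric])
  also have "\<bar>\<dots>\<bar> \<le> (\<Sum>x\<in>A. \<bar>p x - q x\<bar> * \<bar>f x - c\<bar>)"
    using sum_abs by (metis (no_types, lifting) abs_mult sum.cong)
  also have "\<dots> \<le> (\<Sum>x\<in>A. \<bar>p x - q x\<bar> * K)"
    using centred by (intro sum_mono mult_left_mono) auto
  finally show ?thesis by (simp add: sum_distrib_right)
qed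

lemma ln_sum_exp_diff_le:
  fixes x y :: "'a::finite \<Rightarrow> real"
  assumes "\<And>a. x a - y a \<le> D"
  shows "ln (\<Sum>a\<in>UNIV. exp (x a)) - ln (\<Sum>a\<in>UNIV. exp (y a)) \<le> D"
proof -
  have pos: "0 < (\<Sum>a\<in>UNIV. exp (y a))" by (intro sum_pos) auto
  have "(\<Sum>a\<in>UNIV. exp (x a)) \<le> (\<Sum>a\<in>UNIV. exp D * exp (y a))"
  proof (rule sum_mono)
    fix a
    have "x a \<le> D + y a" using assms[of a] by linarith
    then show "exp (x a) \<le> exp D * exp (y a)" by (simp add: exp_add[symmetric])
  qed
  also have "\<dots> = exp D * (\<Sum>a\<in>UNIV. exp (y a))" by (simp add: sum_distrib_left)
  finally have "ln (\<Sum>a\<in>UNIV. exp (x a)) \<le> ln (exp D * (\<Sum>a\<in>UNIV. exp (y a)))"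
    using pos by (simp add: sum_pos)
  also have "\<dots> = D + ln (\<Sum>a\<in>UNIV. exp (y a))" using pos by (simp add: ln_mult)
  finally show ?thesis by simp
qed

lemma abs_soft_value_diff_le:
  assumes "\<And>a. \<bar>Q1 s a - Q2 s a\<bar> \<le> D"
  shows "\<bar>soft_value Q1 s - soft_value Q2 s\<bar> \<le> D"
proof -
  have "soft_value Q1 s - soft_value Q2 s \<le> D" "soft_value Q2 s - soft_value Q1 s \<le> D"
    unfolding soft_value_def using assms
    by (auto intro!: ln_sum_exp_diff_le simp: abs_le_iff)
  then show ?thesis by linarith
qed

lemma softmax_policy_nonneg: "0 \<le> softmax_policy Q s a"
  unfolding softmax_policy_def by (intro divide_nonneg_nonneg) (auto intro: sum_nonneg)

lemma softmax_policy_sum: "(\<Sum>a\<in>UNIV. softmax_policy Q s a) = 1"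
proof -
  have "0 < (\<Sum>b\<in>UNIV. exp (Q s b))" by (intro sum_pos) auto
  then show ?thesis unfolding softmax_policy_def by (simp add: sum_divide_distrib[symmetric])
qed

lemma KL_div_softmax_policy_le:
  assumes "\<And>a. \<bar>Q1 s a - Q2 s a\<bar> \<le> D"
  shows "KL_div (softmax_policy Q1 s) (softmax_policy Q2 s) \<le> 2 * D"
proof -
  let ?p = "softmax_policy Q1 s"
  define S1 where "S1 = (\<Sum>b\<in>UNIV. exp (Q1 s b))"
  define S2 where "S2 = (\<Sum>b\<in>UNIV. exp (Q2 s b))"
  have S: "0 < S1" "0 < S2" unfolding S1_def S2_def by (auto intro: sum_pos)
  have log_ratio: "ln (?p a / softmax_policy Q2 s a)
      = (Q1 s a - Q2 s a) + (soft_value Q2 s - soft_value Q1 s)" for a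
  proof -
    have "?p a / softmax_policy Q2 s a = exp (Q1 s a - Q2 s a) * (S2 / S1)"
      unfolding softmax_policy_def S1_def[symmetric] S2_def[symmetric] using S
      by (simp add: exp_diff)
    then show ?thesis
      unfolding soft_value_def S1_def[symmetric] S2_def[symmetric] using S
      by (simp add: ln_mult ln_div)
  qed
  have "KL_div ?p (softmax_policy Q2 s)
      = (\<Sum>a\<in>UNIV. ?p a * (Q1 s a - Q2 s a)) + (\<Sum>a\<in>UNIV. ?p a) * (soft_value Q2 s - soft_value Q1 s)"
    by (simp only: KL_div_def log_ratio distrib_left sum.distrib sum_distrib_right)
  also have "(\<Sum>a\<in>UNIV. ?p a) = 1" by (rule softmax_policy_sum)
  also have "(\<Sum>a\<in>UNIV. ?p a * (Q1 s a - Q2 s a)) \<le> D"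
    by (rule convex_combination_le) (use assms in \<open>auto simp: softmax_policy_nonneg
        softmax_policy_sum abs_le_iff\<close>)
  also have "soft_value Q2 s - soft_value Q1 s \<le> D"
  proof -
    have "\<bar>soft_value Q1 s - soft_value Q2 s\<bar> \<le> D"
      by (rule abs_soft_value_diff_le) (rule assms)
    then show ?thesis by linarith
  qed
  finally show ?thesis by simp
qed

lemma stochastic_kernelD:
  assumes "stochastic_kernel P"
  shows "0 \<le> P s a s'" "(\<Sum>s'\<in>UNIV. P s a s') = 1"
  using assms unfolding stochastic_kernel_def by auto

lemma sum_abs_diff_le_model_dist:
  "(\<Sum>s'\<in>UNIV. \<bar>P1 s a s' - P2 s a s'\<bar>) \<le> model_dist P1 P2"
  unfolding model_dist_def by (rule Max_ge[of _ "(\<lambda>(s, a). _) (s, a)", simplified]) auto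

lemma model_dist_nonneg: "0 \<le> model_dist P1 P2"
  by (rule order_trans[OF sum_nonneg sum_abs_diff_le_model_dist]) auto

lemma soft_bellman_fixpointD:
  assumes "soft_bellman_fixpoint \<gamma> r P Q"
  shows "Q s a = r s a + \<gamma> * (\<Sum>t\<in>UNIV. P s a t * soft_value Q t)"
  using assms unfolding soft_bellman_fixpoint_def by blast

lemma soft_value_span_le:
  fixes P :: "'s::finite \<Rightarrow> 'a::finite \<Rightarrow> 's \<Rightarrow> real"
  assumes "0 \<le> \<gamma>" "\<gamma> < 1" "\<And>s a. \<bar>r s a\<bar> \<le> Rmax"
    and P: "stochastic_kernel P" and Q: "soft_bellman_fixpoint \<gamma> r P Q"
  shows "soft_value Q s1 - soft_value Q s2 \<le> 2 * (Rmax / (1 - \<gamma>))"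
proof -
  define V where "V = soft_value Q"
  define M where "M = Max (range V)"
  define m where "m = Min (range V)"
  have "m \<le> V s" "V s \<le> M" for s unfolding M_def m_def by auto
  then have mean_bounds: "m \<le> (\<Sum>s'\<in>UNIV. P s a s' * V s')" "(\<Sum>s'\<in>UNIV. P s a s' * V s') \<le> M"
    for s a using stochastic_kernelD[OF P]
    by (auto intro!: convex_combination_ge convex_combination_le)
  have osc: "V s - V s' \<le> 2 * Rmax + \<gamma> * (M - m)" for s s'
    unfolding V_def soft_value_def
  proof (rule ln_sum_exp_diff_le)
    fix a
    have "\<gamma> * (\<Sum>t\<in>UNIV. P s a t * V t) - \<gamma> * (\<Sum>t\<in>UNIV. P s' a t * V t) \<le> \<gamma> * (M - m)"
      using mean_bounds[of s a] mean_bounds[of s' a] assms(1)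
      by (simp add: right_diff_distrib[symmetric] mult_left_mono)
    moreover note soft_bellman_fixpointD[OF Q, of s a] soft_bellman_fixpointD[OF Q, of s' a]
    ultimately show "Q s a - Q s' a \<le> 2 * Rmax + \<gamma> * (M - m)"
      using assms(3)[of s a] assms(3)[of s' a] unfolding V_def by (simp add: abs_le_iff)
  qed
  have "M \<in> range V" "m \<in> range V" unfolding M_def m_def by (auto intro: Max_in Min_in)
  then obtain sM sm where "V sM = M" "V sm = m" by blast
  with osc[of sM sm] have "(1 - \<gamma>) * (M - m) \<le> 2 * Rmax" by (simp add: algebra_simps)
  then have "M - m \<le> 2 * (Rmax / (1 - \<gamma>))" using assms(2) by (simp add: field_simps)
  moreover have "V s1 - V s2 \<le> M - m" unfolding M_def m_def
    by (intro diff_mono) auto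
  ultimately show ?thesis unfolding V_def by linarith
qed

lemma soft_bellman_fixpoint_diff_le:
  fixes P1 P2 :: "'s::finite \<Rightarrow> 'a::finite \<Rightarrow> 's \<Rightarrow> real"
  assumes g: "0 \<le> \<gamma>" "\<gamma> < 1" and r: "\<And>s a. \<bar>r s a\<bar> \<le> Rmax"
    and P1: "stochastic_kernel P1" and P2: "stochastic_kernel P2"
    and Q1: "soft_bellman_fixpoint \<gamma> r P1 Q1" and Q2: "soft_bellman_fixpoint \<gamma> r P2 Q2"
    and E: "\<And>s a. \<bar>Q1 s a - Q2 s a\<bar> \<le> E"
  shows "\<bar>Q1 s a - Q2 s a\<bar> \<le> \<gamma> * (model_dist P1 P2 * (Rmax / (1 - \<gamma>)) + E)"
proof -
  define K where "K = Rmax / (1 - \<gamma>)"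
  define V1 where "V1 = soft_value Q1"
  define V2 where "V2 = soft_value Q2"
  have "0 \<le> K" unfolding K_def using r[of s a] g by simp
  have "\<bar>\<Sum>t\<in>UNIV. (P1 s a t - P2 s a t) * V1 t\<bar> \<le> (\<Sum>t\<in>UNIV. \<bar>P1 s a t - P2 s a t\<bar>) * K"
    using soft_value_span_le[OF g r P1 Q1] stochastic_kernelD[OF P1] stochastic_kernelD[OF P2]
    unfolding V1_def K_def by (intro abs_sum_diff_mult_le) auto
  also have "\<dots> \<le> model_dist P1 P2 * K"
    using \<open>0 \<le> K\<close> by (intro mult_right_mono sum_abs_diff_le_model_dist)
  finally have model_error: "\<bar>\<Sum>t\<in>UNIV. (P1 s a t - P2 s a t) * V1 t\<bar> \<le> model_dist P1 P2 * K" .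
  have VE_abs: "\<bar>V1 t - V2 t\<bar> \<le> E" for t
    unfolding V1_def V2_def by (rule abs_soft_value_diff_le) (rule E)
  have VE: "- E \<le> V1 t - V2 t" "V1 t - V2 t \<le> E" for t
    using VE_abs[of t] by (auto simp: abs_le_iff)
  have "- E \<le> (\<Sum>t\<in>UNIV. P2 s a t * (V1 t - V2 t))"
    by (rule convex_combination_ge) (use stochastic_kernelD[OF P2] VE in auto)
  moreover have "(\<Sum>t\<in>UNIV. P2 s a t * (V1 t - V2 t)) \<le> E"
    by (rule convex_combination_le) (use stochastic_kernelD[OF P2] VE in auto)
  ultimately have value_error: "\<bar>\<Sum>t\<in>UNIV. P2 s a t * (V1 t - V2 t)\<bar> \<le> E"
    by linarith
  have "Q1 s a - Q2 s a
      = \<gamma> * ((\<Sum>t\<in>UNIV. (P1 s a t - P2 s a t) * V1 t) + (\<Sum>t\<in>UNIV. P2 s a t * (V1 t - V2 t)))"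
    using soft_bellman_fixpointD[OF Q1, of s a] soft_bellman_fixpointD[OF Q2, of s a]
    unfolding V1_def V2_def by (simp add: algebra_simps sum_subtractf)
  then have "\<bar>Q1 s a - Q2 s a\<bar>
      = \<gamma> * \<bar>(\<Sum>t\<in>UNIV. (P1 s a t - P2 s a t) * V1 t) + (\<Sum>t\<in>UNIV. P2 s a t * (V1 t - V2 t))\<bar>"
    using g by (simp add: abs_mult)
  also have "\<dots> \<le> \<gamma> * (model_dist P1 P2 * K + E)"
    by (rule mult_left_mono[OF order_trans[OF abs_triangle_ineq add_mono[OF model_error value_error]]])
      (use g in simp)
  finally show ?thesis unfolding K_def .
qed

lemma soft_bellman_fixpoint_model_perturbation:
  fixes P1 P2 :: "'s::finite \<Rightarrow> 'a::finite \<Rightarrow> 's \<Rightarrow> real"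
  assumes g: "0 \<le> \<gamma>" "\<gamma> < 1" and r: "\<And>s a. \<bar>r s a\<bar> \<le> Rmax"
    and "stochastic_kernel P1" "stochastic_kernel P2"
    and "soft_bellman_fixpoint \<gamma> r P1 Q1" "soft_bellman_fixpoint \<gamma> r P2 Q2"
  shows "\<bar>Q1 s a - Q2 s a\<bar> \<le> model_dist P1 P2 * Rmax / (1 - \<gamma>)^2"
proof -
  define \<Delta> where "\<Delta> = model_dist P1 P2"
  define K where "K = Rmax / (1 - \<gamma>)"
  define E where "E = Max (range (\<lambda>(s, a). \<bar>Q1 s a - Q2 s a\<bar>))"
  have QE: "\<bar>Q1 s a - Q2 s a\<bar> \<le> E" for s a
    unfolding E_def by (rule Max_ge[of _ "(\<lambda>(s, a). _) (s, a)", simplified]) auto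
  have "Max (range (\<lambda>(s, a). \<bar>Q1 s a - Q2 s a\<bar>)) \<le> \<gamma> * (\<Delta> * K + E)"
  proof (rule Max.boundedI)
    fix x assume "x \<in> range (\<lambda>(s, a). \<bar>Q1 s a - Q2 s a\<bar>)"
    then obtain s a where "x = \<bar>Q1 s a - Q2 s a\<bar>" by auto
    then show "x \<le> \<gamma> * (\<Delta> * K + E)"
      using soft_bellman_fixpoint_diff_le[OF assms QE] unfolding \<Delta>_def K_def by blast
  qed auto
  then have "E \<le> \<gamma> * (\<Delta> * K + E)" by (simp only: E_def)
  then have "(1 - \<gamma>) * E \<le> \<gamma> * (\<Delta> * K)" by (simp add: algebra_simps)
  also have "\<dots> \<le> \<Delta> * K"
    using g r[of s a] model_dist_nonneg[of P1 P2] unfolding \<Delta>_def K_def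
    by (intro mult_left_le_one_le mult_nonneg_nonneg) auto
  finally have "E \<le> \<Delta> * K / (1 - \<gamma>)" using g by (simp add: field_simps)
  then show ?thesis
    using QE[of s a] g unfolding \<Delta>_def K_def by (simp add: power2_eq_square)
qed

lemma state_dist_probability:
  assumes P: "stochastic_kernel P" and \<pi>: "\<And>s a. 0 \<le> \<pi> s a" "\<And>s. (\<Sum>a\<in>UNIV. \<pi> s a) = 1"
    and \<mu>0: "\<And>s. 0 \<le> \<mu>0 s" "(\<Sum>s\<in>UNIV. \<mu>0 s) = 1"
  shows "0 \<le> state_dist \<mu>0 P \<pi> t s \<and> (\<Sum>s\<in>UNIV. state_dist \<mu>0 P \<pi> t s) = 1"
proof (induction t arbitrary: s)
  case 0
  then show ?case using \<mu>0 by simp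
next
  case (Suc t)
  have transition_nonneg: "0 \<le> policy_transition P \<pi> s s'" for s s'
    unfolding policy_transition_def using stochastic_kernelD[OF P] \<pi> by (auto intro!: sum_nonneg)
  have row_sum: "(\<Sum>s'\<in>UNIV. policy_transition P \<pi> s s') = 1" for s
  proof -
    have "(\<Sum>s'\<in>UNIV. policy_transition P \<pi> s s') = (\<Sum>a\<in>UNIV. \<pi> s a * (\<Sum>s'\<in>UNIV. P s a s'))"
      unfolding policy_transition_def sum_distrib_left by (rule sum.swap)
    then show ?thesis using stochastic_kernelD[OF P] \<pi> by simp
  qed
  have "(\<Sum>s'\<in>UNIV. \<Sum>s\<in>UNIV. state_dist \<mu>0 P \<pi> t s * policy_transition P \<pi> s s')
      = (\<Sum>s\<in>UNIV. state_dist \<mu>0 P \<pi> t s * (\<Sum>s'\<in>UNIV. policy_transition P \<pi> s s'))"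
    unfolding sum_distrib_left by (rule sum.swap)
  then show ?case
    using Suc.IH row_sum transition_nonneg by (auto intro!: sum_nonneg)
qed

lemma discounted_state_dist_probability:
  assumes "stochastic_kernel P" "\<And>s a. 0 \<le> \<pi> s a" "\<And>s. (\<Sum>a\<in>UNIV. \<pi> s a) = 1"
    and "\<And>s. 0 \<le> \<mu>0 s" "(\<Sum>s\<in>UNIV. \<mu>0 s) = 1" and g: "0 \<le> \<gamma>" "\<gamma> < 1"
  shows "0 \<le> discounted_state_dist \<gamma> \<mu>0 P \<pi> s"
    and "(\<Sum>s\<in>UNIV. discounted_state_dist \<gamma> \<mu>0 P \<pi> s) = 1"
proof -
  note dist = state_dist_probability[OF assms(1-5)]
  have le1: "state_dist \<mu>0 P \<pi> t s \<le> 1" for t s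
    using member_le_sum[of s UNIV "state_dist \<mu>0 P \<pi> t"] dist by auto
  have summable: "summable (\<lambda>t. \<gamma> ^ t * state_dist \<mu>0 P \<pi> t s)" for s
    using g dist le1
    by (intro summable_comparison_test'[OF summable_geometric[of \<gamma>]])
       (auto intro: mult_left_le)
  show "0 \<le> discounted_state_dist \<gamma> \<mu>0 P \<pi> s"
    unfolding discounted_state_dist_def using g dist
    by (intro mult_nonneg_nonneg suminf_nonneg summable) auto
  have "(\<Sum>s\<in>UNIV. \<Sum>t. \<gamma> ^ t * state_dist \<mu>0 P \<pi> t s) = (\<Sum>t. \<Sum>s\<in>UNIV. \<gamma> ^ t * state_dist \<mu>0 P \<pi> t s)"
    using summable by (simp add: suminf_sum)
  also have "\<dots> = (\<Sum>t. \<gamma> ^ t)" using dist by (simp add: sum_distrib_left[symmetric])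
  also have "\<dots> = 1 / (1 - \<gamma>)" using g by (intro suminf_geometric) simp
  finally show "(\<Sum>s\<in>UNIV. discounted_state_dist \<gamma> \<mu>0 P \<pi> s) = 1"
    unfolding discounted_state_dist_def using g by (simp add: sum_distrib_left[symmetric])
qed

theorem corollary1:
  fixes r :: "'s::finite \<Rightarrow> 'a::finite \<Rightarrow> real"
    and Pstar Ptil :: "'s \<Rightarrow> 'a \<Rightarrow> 's \<Rightarrow> real"
    and Qstar Qtil :: "'s \<Rightarrow> 'a \<Rightarrow> real"
    and \<mu>0 :: "'s \<Rightarrow> real"
    and \<gamma> Rmax :: real
  assumes "0 < \<gamma>" and "\<gamma> < 1"
    and "\<And>s a. \<bar>r s a\<bar> \<le> Rmax"
    and "stochastic_kernel Pstar" and "stochastic_kernel Ptil"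
    and "soft_bellman_fixpoint \<gamma> r Pstar Qstar"
    and "soft_bellman_fixpoint \<gamma> r Ptil Qtil"
    and "\<And>s. 0 \<le> \<mu>0 s" and "(\<Sum>s\<in>UNIV. \<mu>0 s) = 1"
  shows "(\<Sum>s\<in>UNIV. discounted_state_dist \<gamma> \<mu>0 Pstar (softmax_policy Qstar) s *
            KL_div (softmax_policy Qstar s) (softmax_policy Qtil s))
         \<le> 2 * real (card (UNIV :: 'a set)) * Rmax / (1 - \<gamma>)^2 * model_dist Pstar Ptil"
proof -
  let ?w = "discounted_state_dist \<gamma> \<mu>0 Pstar (softmax_policy Qstar)"
  let ?n = "real (card (UNIV :: 'a set))"
  have g: "0 \<le> \<gamma>" using assms(1) by simp
  define D where "D = model_dist Pstar Ptil * Rmax / (1 - \<gamma>)^2"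
  note Q_bound = soft_bellman_fixpoint_model_perturbation[OF g assms(2-7)]
  have "0 \<le> D" unfolding D_def by (rule order_trans[OF abs_ge_zero Q_bound])
  moreover have "1 \<le> ?n" by (simp add: Suc_le_eq finite_UNIV_card_ge_0)
  ultimately have "2 * D \<le> 2 * ?n * D" by (simp add: mult_right_mono)
  moreover have "KL_div (softmax_policy Qstar s) (softmax_policy Qtil s) \<le> 2 * D" for s
    unfolding D_def by (rule KL_div_softmax_policy_le) (rule Q_bound)
  moreover note discounted_state_dist_probability[OF assms(4) softmax_policy_nonneg[of Qstar]
      softmax_policy_sum[of Qstar] assms(8,9) g assms(2)]
  ultimately have "(\<Sum>s\<in>UNIV. ?w s * KL_div (softmax_policy Qstar s) (softmax_policy Qtil s))
      \<le> 2 * ?n * D"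
    by (intro convex_combination_le order_trans[OF _ \<open>2 * D \<le> 2 * ?n * D\<close>]) auto
  also have "\<dots> = 2 * ?n * Rmax / (1 - \<gamma>)^2 * model_dist Pstar Ptil"
    unfolding D_def by (simp add: algebra_simps)
  finally show ?thesis .
qed

end
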